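(* Let $\mathfrak{H}$ be a Euclidean space and let $(\mathcal{X},\mathsf{S},\gamma,(\Lambda_{a})_{a\in\mathcal{A}})$ be a spectral decomposition system for $\mathfrak{H}$ such that the set $\{\Lambda_a\}_{a\in\mathcal{A}}$ is closed in $\mathscr{L}(\mathcal{X},\mathfrak{H})$. Let $\varphi\colon\mathcal{X}\to(-\infty,+\infty]$ be proper and $\mathsf{S}$-invariant, let $\Psi\colon\mathfrak{H}\to\mathbb{R}$ be Fréchet differentiable, and let $X\in\mathfrak{H}$ be such that $\gamma(X)\in\operatorname{dom}\varphi$. Suppose that $X$ is a local minimizer of $\varphi\circ\gamma+\Psi$. Then there exist $y\in\partial_{\mathsf{F}}\varphi(\gamma(X))$ and $a\in\mathcal{A}_X$ such that $-\nabla\Psi(X)=\Lambda_a y$.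
   Context: A Euclidean space is a finite-dimensional real Hilbert space; $\mathscr{L}(\mathcal{X},\mathfrak{H})$ carries the operator-norm topology. A spectral decomposition system for a Euclidean space $\mathfrak{H}$ is a tuple $(\mathcal{X},\mathsf{S},\gamma,(\Lambda_a)_{a\in\mathcal{A}})$ where $\mathcal{X}$ is a Euclidean space, $\mathsf{S}$ is a group acting on $\mathcal{X}$ such that each map $x\mapsto \mathsf{s}\cdot x$ is a linear isometry, $\gamma\colon\mathfrak{H}\to\mathcal{X}$ is a mapping, and each $\Lambda_a\colon\mathcal{X}\to\mathfrak{H}$ is a linear isometry, such that: [A] there exists a mapping $\tau\colon\mathcal{X}\to\mathcal{X}$ with $\tau(\mathsf{s}\cdot x)=\tau(x)$ for all $\mathsf{s},x$, $\tau(x)\in\mathsf{S}\cdot x$ for all $x$, and $\gamma\circ\Lambda_a=\tau$ for all $a\in\mathcal{A}$; [B] for every $X\in\mathfrak{H}$ there exists $a\in\mathcal{A}$ with $X=\Lambda_a\gamma(X)$; [C] $\langle X,Y\rangle\le\langle\gamma(X),\gamma(Y)\rangle$ for all $X,Y\in\mathfrak{H}$. $\mathcal{A}_X=\{a\in\mathcal{A}:X=\Lambda_a\gamma(X)\}$. A function $\varphi$ on $\mathcal{X}$ is $\mathsf{S}$-invariant if $\varphi(\mathsf{s}\cdot x)=\varphi(x)$ for all $\mathsf{s},x$; $\operatorname{dom}\varphi=\{x:\varphi(x)<+\infty\}$. The Fréchet subdifferential of $f$ at $x$ with $f(x)\in\mathbb{R}$ is $\partial_{\mathsf{F}}f(x)=\{y:\liminf_{z\to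 x,z\ne x}(f(z)-f(x)-\langle z-x,y\rangle)/\|z-x\|\ge0\}$. *)

theory Defs
  imports "HOL-Analysis.Analysis" "HOL-Algebra.Group_Action"
begin

definition lin_isometry :: "('a::real_normed_vector \<Rightarrow> 'b::real_normed_vector) \<Rightarrow> bool" where
  "lin_isometry f \<longleftrightarrow> linear f \<and> (\<forall>x. norm (f x) = norm x)"

text \<open>Spectral decomposition system (X, S, gam, (Lam a)_{a in A}) for H.
  The group S is a HOL-Algebra group G acting on the whole space X via act,
  each act s being a linear isometry.\<close>
definition spectral_decomposition_system ::
  "('s, 'm) monoid_scheme \<Rightarrow> ('s \<Rightarrow> 'x::euclidean_space \<Rightarrow> 'x) \<Rightarrow>
   ('h::euclidean_space \<Rightarrow> 'x) \<Rightarrow> 'a set \<Rightarrow> ('a \<Rightarrow> 'x \<Rightarrow> 'h) \<Rightarrow> bool" where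
  "spectral_decomposition_system G act gam A Lam \<longleftrightarrow>
     group_action G UNIV act \<and>
     (\<forall>s\<in>carrier G. lin_isometry (act s)) \<and>
     (\<forall>a\<in>A. lin_isometry (Lam a)) \<and>
     (\<exists>tau. (\<forall>s\<in>carrier G. \<forall>x. tau (act s x) = tau x) \<and>
            (\<forall>x. tau x \<in> {act s x | s. s \<in> carrier G}) \<and>
            (\<forall>a\<in>A. \<forall>x. gam (Lam a x) = tau x)) \<and>
     (\<forall>X. \<exists>a\<in>A. X = Lam a (gam X)) \<and>
     (\<forall>X Y. inner X Y \<le> inner (gam X) (gam Y))"

definition A_of :: "'a set \<Rightarrow> ('a \<Rightarrow> 'x \<Rightarrow> 'h) \<Rightarrow> ('h \<Rightarrow> 'x) \<Rightarrow> 'h \<Rightarrow> 'a set" where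
  "A_of A Lam gam X = {a \<in> A. X = Lam a (gam X)}"

definition S_invariant :: "('s, 'm) monoid_scheme \<Rightarrow> ('s \<Rightarrow> 'x \<Rightarrow> 'x) \<Rightarrow> ('x \<Rightarrow> 'b) \<Rightarrow> bool" where
  "S_invariant G act f \<longleftrightarrow> (\<forall>s\<in>carrier G. \<forall>x. f (act s x) = f x)"

definition edom :: "('x \<Rightarrow> ereal) \<Rightarrow> 'x set" where
  "edom f = {x. f x < \<infinity>}"

definition proper_fun :: "('x \<Rightarrow> ereal) \<Rightarrow> bool" where
  "proper_fun f \<longleftrightarrow> (\<forall>x. f x \<noteq> -\<infinity>) \<and> edom f \<noteq> {}"

text \<open>Frechet subdifferential (defined when f x is real; empty otherwise).\<close>
definition frechet_subdiff :: "('x::real_inner \<Rightarrow> ereal) \<Rightarrow> 'x \<Rightarrow> 'x set" where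
  "frechet_subdiff f x = {y. \<bar>f x\<bar> \<noteq> \<infinity> \<and>
     Liminf (at x) (\<lambda>z. (f z - f x - ereal (inner (z - x) y)) / ereal (norm (z - x))) \<ge> 0}"

definition local_minimizer :: "('x::metric_space \<Rightarrow> ereal) \<Rightarrow> 'x \<Rightarrow> bool" where
  "local_minimizer f x \<longleftrightarrow> (\<exists>e>0. \<forall>z. dist z x < e \<longrightarrow> f x \<le> f z)"

end

theory Submission
  imports Defs
begin

text \<open>
  Since \<open>phi\<close> is \<open>S\<close>-invariant, \<open>phi (gam (Lam a x)) = phi x\<close>; hence \<open>X\<close> locally
  minimises \<open>Psi\<close> on the set of points \<open>Lam a (gam X)\<close>, \<open>a \<in> A\<close>. Write \<open>g\<close> for the gradient
  of \<open>Psi\<close> at \<open>X\<close> and decompose \<open>X - t g = Lam a\<^sub>t (gam (X - t g))\<close>. The inequality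
  \<open>\<langle>Y, Z\<rangle> \<le> \<langle>gam Y, gam Z\<rangle>\<close> together with the minimality of \<open>Psi\<close> forces
  \<open>Lam a\<^sub>t (gam X) - X = o(t)\<close>, so \<open>Lam a\<^sub>t w\<^sub>t \<rightarrow> g\<close> for the bounded vectors
  \<open>w\<^sub>t = (gam X - gam (X - t g)) / t\<close>. The operators \<open>Lam a\<close> form a compact set, and a limit
  point \<open>Lam a\<close> satisfies \<open>X = Lam a (gam X)\<close> and \<open>g = Lam a w\<close>. Pulling back along the
  isometry \<open>Lam a\<close>, \<open>gam X\<close> is a local minimiser of \<open>phi + Psi \<circ> Lam a\<close>, whose smooth part
  has gradient \<open>w\<close> at \<open>gam X\<close>; Fermat's rule for the Frechet subdifferential then gives
  \<open>- w \<in> \<partial>\<^sub>F phi (gam X)\<close>.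
\<close>

lemma le_of_square_le_mult:
  fixes x c :: real
  assumes "x\<^sup>2 \<le> c * x" and "0 \<le> c"
  shows "x \<le> c"
  using assms by (cases "x \<le> 0") (auto simp: power2_eq_square mult_le_cancel_right)

lemma lin_isometry_inner:
  assumes "lin_isometry f"
  shows "inner (f u) (f v) = inner u v"
proof -
  have lin: "linear f" and norm_eq: "\<And>x. norm (f x) = norm x"
    using assms unfolding lin_isometry_def by auto
  have "f (u + v) = f u + f v" using lin by (simp add: linear_add)
  then show ?thesis
    using norm_eq[of "u + v"] norm_eq[of u] norm_eq[of v]
    by (simp add: dot_norm[of "f u"] dot_norm[of u])
qed

lemma lin_isometry_bounded_linear:
  assumes "lin_isometry f"
  shows "bounded_linear f"
  using assms unfolding lin_isometry_def
  by (intro bounded_linear_intro[of f 1]) (auto simp: linear_add linear_scale)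

lemma norm_Blinfun_lin_isometry_le:
  assumes "lin_isometry f"
  shows "norm (Blinfun f) \<le> 1"
  using assms
  by (intro norm_blinfun_bound)
     (auto simp: bounded_linear_Blinfun_apply lin_isometry_bounded_linear lin_isometry_def)

lemma differentiable_imp_gderiv:
  fixes f :: "'a::euclidean_space \<Rightarrow> real"
  assumes "f differentiable (at x)"
  obtains g where "GDERIV f x :> g"
proof -
  obtain D where D: "(f has_derivative D) (at x)"
    using assms by (auto simp: differentiable_def)
  then have "linear D" by (simp add: has_derivative_linear)
  then have "D h = inner h (adjoint D 1)" for h
    by (simp add: adjoint_works)
  then have "GDERIV f x :> adjoint D 1"
    using D unfolding gderiv_def by (metis ext)
  then show ?thesis by (rule that)
qed

lemma gderiv_remainder_bound:
  assumes "GDERIV f x :> g" and "eps > 0"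
  obtains d where "d > 0"
    and "\<And>y. norm (y - x) < d \<Longrightarrow> \<bar>f y - f x - inner (y - x) g\<bar> \<le> eps * norm (y - x)"
  using assms unfolding gderiv_def has_derivative_at_alt real_norm_def by blast

lemma gderiv_compose_lin_isometry:
  assumes "lin_isometry L" and "GDERIV f (L x) :> L v"
  shows "GDERIV (\<lambda>z. f (L z)) x :> v"
proof -
  have "(L has_derivative L) (at x)"
    using assms(1) by (intro bounded_linear_imp_has_derivative lin_isometry_bounded_linear)
  moreover have "(f has_derivative (\<lambda>h. inner h (L v))) (at (L x))"
    using assms(2) unfolding gderiv_def .
  ultimately have "((\<lambda>z. f (L z)) has_derivative (\<lambda>h. inner (L h) (L v))) (at x)"
    by (rule has_derivative_compose)
  then show ?thesis
    using lin_isometry_inner[OF assms(1)] by (simp add: gderiv_def)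
qed

lemma frechet_subdiffI:
  assumes finite: "\<bar>f x\<bar> \<noteq> \<infinity>"
    and lower: "\<And>eps. eps > 0 \<Longrightarrow>
      eventually (\<lambda>z. f x + ereal (inner (z - x) y - eps * norm (z - x)) \<le> f z) (at x)"
  shows "y \<in> frechet_subdiff f x"
  unfolding frechet_subdiff_def le_Liminf_iff
proof (intro CollectI conjI allI impI)
  obtain c where c: "f x = ereal c" using finite by (cases "f x") auto
  fix b :: ereal assume "b < 0"
  then obtain eps where eps: "eps > 0" "b < ereal (- eps)"
    by (cases b) (auto intro: that[of 1] that[of "- real_of_ereal b / 2"])
  have pointwise: "(f z - f x - ereal (inner (z - x) y)) / ereal (norm (z - x)) \<ge> ereal (- eps)"
    if z: "z \<noteq> x" "f x + ereal (inner (z - x) y - eps * norm (z - x)) \<le> f z" for z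
  proof (cases "f z")
    case (real p)
    have "- eps * norm (z - x) \<le> p - c - inner (z - x) y" using z(2) real c by simp
    then show ?thesis using z(1) real c by (simp add: field_simps)
  qed (use z c in auto)
  show "\<forall>\<^sub>F z in at x. b < (f z - f x - ereal (inner (z - x) y)) / ereal (norm (z - x))"
    using lower[OF eps(1)] eventually_neq_at_within[where z = x and A = UNIV and x = x]
    by eventually_elim (use pointwise eps(2) in \<open>blast intro: less_le_trans\<close>)
qed (use finite in simp)

lemma local_minimizer_frechet_subdiff:
  fixes f :: "'x::real_inner \<Rightarrow> ereal"
  assumes min: "local_minimizer (\<lambda>z. f z + ereal (h z)) x"
    and grad: "GDERIV h x :> v"
    and finite: "\<bar>f x\<bar> \<noteq> \<infinity>"
  shows "- v \<in> frechet_subdiff f x"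
proof (rule frechet_subdiffI[where f = f and x = x, OF finite])
  fix eps :: real assume "eps > 0"
  obtain e where e: "e > 0" "\<And>z. dist z x < e \<Longrightarrow> f x + ereal (h x) \<le> f z + ereal (h z)"
    using min unfolding local_minimizer_def by blast
  obtain d where d: "d > 0"
    "\<And>z. norm (z - x) < d \<Longrightarrow> \<bar>h z - h x - inner (z - x) v\<bar> \<le> eps * norm (z - x)"
    using gderiv_remainder_bound[OF grad \<open>eps > 0\<close>] by blast
  obtain c where c: "f x = ereal c" using finite by (cases "f x") auto
  have "f x + ereal (inner (z - x) (- v) - eps * norm (z - x)) \<le> f z"
    if "dist z x < min e d" for z
  proof (cases "f z")
    case (real p)
    have "c + h x \<le> p + h z" using e(2)[of z] that real c by simp
    moreover have "\<bar>h z - h x - inner (z - x) v\<bar> \<le> eps * norm (z - x)"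
      using d(2)[of z] that by (simp add: dist_norm)
    ultimately show ?thesis using real c by (simp add: abs_le_iff)
  next
    case MInf
    then show ?thesis using e(2)[of z] that c by simp
  qed simp
  then show "\<forall>\<^sub>F z in at x. f x + ereal (inner (z - x) (- v) - eps * norm (z - x)) \<le> f z"
    using e(1) d(1) by (auto simp: eventually_at intro!: exI[of _ "min e d"])
qed

lemma compact_blinfun_sequence_limit:
  fixes L :: "nat \<Rightarrow> 'a::euclidean_space \<Rightarrow>\<^sub>L 'b::euclidean_space"
  assumes K: "compact K" "\<And>n. L n \<in> K"
    and bounded: "\<And>n. norm (w n) \<le> B"
    and lim_w: "(\<lambda>n. blinfun_apply (L n) (w n)) \<longlonglongrightarrow> v"
    and lim_x: "(\<lambda>n. blinfun_apply (L n) x) \<longlonglongrightarrow> y"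
  shows "\<exists>L0\<in>K. \<exists>w0. blinfun_apply L0 w0 = v \<and> blinfun_apply L0 x = y"
proof -
  have "seq_compact (K \<times> cball (0::'a) B)"
    using compact_Times[OF K(1) compact_cball] by (rule compact_imp_seq_compact)
  moreover have "\<forall>n. (L n, w n) \<in> K \<times> cball 0 B" using K(2) bounded by simp
  ultimately obtain l r where l: "l \<in> K \<times> cball 0 B" and r: "strict_mono r"
    and lim: "((\<lambda>n. (L n, w n)) \<circ> r) \<longlonglongrightarrow> l"
    by (rule seq_compactE)
  obtain L0 w0 where l_eq: "l = (L0, w0)" by (cases l)
  have L_lim: "(\<lambda>n. L (r n)) \<longlonglongrightarrow> L0" and w_lim: "(\<lambda>n. w (r n)) \<longlonglongrightarrow> w0"
    using tendsto_fst[OF lim] tendsto_snd[OF lim] by (simp_all add: l_eq o_def)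
  have "(\<lambda>n. blinfun_apply (L (r n)) (w (r n))) \<longlonglongrightarrow> blinfun_apply L0 w0"
    using L_lim w_lim by (rule blinfun.tendsto)
  moreover have "(\<lambda>n. blinfun_apply (L (r n)) (w (r n))) \<longlonglongrightarrow> v"
    using LIMSEQ_subseq_LIMSEQ[OF lim_w r] by (simp add: o_def)
  ultimately have "blinfun_apply L0 w0 = v" by (rule LIMSEQ_unique)
  have "(\<lambda>n. blinfun_apply (L (r n)) x) \<longlonglongrightarrow> blinfun_apply L0 x"
    using L_lim tendsto_const by (rule blinfun.tendsto)
  moreover have "(\<lambda>n. blinfun_apply (L (r n)) x) \<longlonglongrightarrow> y"
    using LIMSEQ_subseq_LIMSEQ[OF lim_x r] by (simp add: o_def)
  ultimately have "blinfun_apply L0 x = y" by (rule LIMSEQ_unique)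
  moreover have "L0 \<in> K" using l l_eq by simp
  ultimately show ?thesis using \<open>blinfun_apply L0 w0 = v\<close> by blast
qed

context
  fixes G :: "('s, 'm) monoid_scheme"
    and act :: "'s \<Rightarrow> 'x::euclidean_space \<Rightarrow> 'x"
    and gam :: "'h::euclidean_space \<Rightarrow> 'x"
    and A :: "'a set"
    and Lam :: "'a \<Rightarrow> 'x \<Rightarrow> 'h"
  assumes sds: "spectral_decomposition_system G act gam A Lam"
begin

lemma sds_Lam_isometry: "a \<in> A \<Longrightarrow> lin_isometry (Lam a)"
  using sds unfolding spectral_decomposition_system_def by blast

lemma sds_decomposition: "\<exists>a\<in>A. Y = Lam a (gam Y)"
  using sds unfolding spectral_decomposition_system_def by blast

lemma sds_inner_le: "inner Y Z \<le> inner (gam Y) (gam Z)"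
  using sds unfolding spectral_decomposition_system_def by blast

lemma sds_invariant_gam_Lam:
  assumes "S_invariant G act f" and "a \<in> A"
  shows "f (gam (Lam a z)) = f z"
proof -
  obtain tau where orbit: "\<And>x. tau x \<in> {act s x | s. s \<in> carrier G}"
    and gam_Lam: "\<And>a x. a \<in> A \<Longrightarrow> gam (Lam a x) = tau x"
    using sds unfolding spectral_decomposition_system_def by blast
  obtain s where "s \<in> carrier G" "tau z = act s z" using orbit by blast
  then show ?thesis using assms gam_Lam unfolding S_invariant_def by simp
qed

lemma norm_gam: "norm (gam Y) = norm Y"
  using sds_decomposition[of Y] sds_Lam_isometry unfolding lin_isometry_def by metis

lemma norm_gam_diff_le: "norm (gam Y - gam Z) \<le> norm (Y - Z)"
proof -
  have "(norm (gam Y - gam Z))\<^sup>2 = (norm (gam Y))\<^sup>2 + (norm (gam Z))\<^sup>2 - 2 * inner (gam Y) (gam Z)"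
    by (simp add: power2_norm_eq_inner inner_diff_left inner_diff_right inner_commute)
  also have "\<dots> \<le> (norm Y)\<^sup>2 + (norm Z)\<^sup>2 - 2 * inner Y Z"
    using sds_inner_le[of Y Z] by (simp add: norm_gam)
  also have "\<dots> = (norm (Y - Z))\<^sup>2"
    by (simp add: power2_norm_eq_inner inner_diff_left inner_diff_right inner_commute)
  finally show ?thesis by (rule power2_le_imp_le) simp
qed

lemma compact_Lam_image:
  assumes "closed ((\<lambda>a. Blinfun (Lam a)) ` A)"
  shows "compact ((\<lambda>a. Blinfun (Lam a)) ` A)"
proof -
  have "bounded ((\<lambda>a. Blinfun (Lam a)) ` A)"
    unfolding bounded_iff using sds_Lam_isometry norm_Blinfun_lin_isometry_le by blast
  then show ?thesis using assms compact_eq_bounded_closed by blast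
qed

lemma sds_step_inner_le:
  assumes "a \<in> A" and "Y = Lam a (gam Y)"
  shows "2 * inner (Lam a (gam X) - X) (X - Y) \<le> - (norm (Lam a (gam X) - X))\<^sup>2"
proof -
  let ?M = "Lam a (gam X)"
  have "inner ?M Y = inner (gam X) (gam Y)"
    using assms lin_isometry_inner sds_Lam_isometry by metis
  then have "inner X Y \<le> inner ?M Y" using sds_inner_le by simp
  moreover have "inner ?M ?M = inner X X"
    using norm_gam sds_Lam_isometry[OF assms(1)]
    by (simp add: lin_isometry_def flip: power2_norm_eq_inner)
  ultimately show ?thesis
    by (simp add: power2_norm_eq_inner inner_diff_left inner_diff_right inner_commute)
qed

lemma sds_orbit_displacement_le:
  assumes grad: "GDERIV Psi X :> g"
    and "e > 0"
    and orbit_min: "\<And>a. a \<in> A \<Longrightarrow> dist (Lam a (gam X)) X < e \<Longrightarrow> Psi X \<le> Psi (Lam a (gam X))"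
    and "eps > 0"
  obtains \<delta> where "\<delta> > 0"
    and "\<And>t a. 0 < t \<Longrightarrow> t < \<delta> \<Longrightarrow> a \<in> A \<Longrightarrow> X - t *\<^sub>R g = Lam a (gam (X - t *\<^sub>R g)) \<Longrightarrow>
           norm (Lam a (gam X) - X) \<le> eps * t"
proof -
  obtain r where r: "r > 0"
    "\<And>Z. norm (Z - X) < r \<Longrightarrow> \<bar>Psi Z - Psi X - inner (Z - X) g\<bar> \<le> eps / 2 * norm (Z - X)"
    using gderiv_remainder_bound[OF grad, of "eps / 2"] \<open>eps > 0\<close> by auto
  have denom_pos: "2 * norm g + 1 > 0" using norm_ge_zero[of g] by linarith
  define \<delta> where "\<delta> = min e r / (2 * norm g + 1)"
  show ?thesis
  proof (rule that)
    show "\<delta> > 0" using \<open>e > 0\<close> r(1) denom_pos by (simp add: \<delta>_def)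
  next
    fix t a
    assume t: "0 < t" "t < \<delta>" and a: "a \<in> A" "X - t *\<^sub>R g = Lam a (gam (X - t *\<^sub>R g))"
    define d where "d = Lam a (gam X) - X"
    have step: "(norm d)\<^sup>2 \<le> 2 * t * (- inner d g)"
      using sds_step_inner_le[OF a, of X] by (simp add: d_def)
    also have "\<dots> \<le> 2 * t * (norm g * norm d)"
      using norm_cauchy_schwarz[of "- d" g] t(1) by (intro mult_left_mono) (simp_all add: mult.commute)
    also have "\<dots> = (2 * t * norm g) * norm d" by simp
    finally have "norm d \<le> 2 * t * norm g"
      by (rule le_of_square_le_mult) (use t(1) in simp)
    moreover have "t * (2 * norm g + 1) < min e r"
      using t(2) denom_pos by (simp add: \<delta>_def pos_less_divide_eq)
    moreover have "2 * t * norm g \<le> t * (2 * norm g + 1)" using t(1) by (simp add: distrib_left)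
    ultimately have small: "norm d < min e r" by linarith
    then have "Psi X \<le> Psi (X + d)" using orbit_min[OF a(1)] by (simp add: d_def dist_norm)
    moreover have "\<bar>Psi (X + d) - Psi X - inner d g\<bar> \<le> eps / 2 * norm d"
      using r(2)[of "X + d"] small by simp
    ultimately have "- inner d g \<le> eps / 2 * norm d" by (simp only: abs_le_iff) linarith
    then have "2 * t * (- inner d g) \<le> 2 * t * (eps / 2 * norm d)"
      using t(1) by (intro mult_left_mono) simp_all
    also have "\<dots> = (eps * t) * norm d" by simp
    finally have "(norm d)\<^sup>2 \<le> (eps * t) * norm d" using step by linarith
    then show "norm (Lam a (gam X) - X) \<le> eps * t"
      unfolding d_def[symmetric] by (rule le_of_square_le_mult) (use t(1) \<open>eps > 0\<close> in simp)
  qed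
qed

lemma sds_aligned_gradient:
  assumes closed: "closed ((\<lambda>a. Blinfun (Lam a)) ` A)"
    and grad: "GDERIV Psi X :> g"
    and "e > 0"
    and orbit_min: "\<And>a. a \<in> A \<Longrightarrow> dist (Lam a (gam X)) X < e \<Longrightarrow> Psi X \<le> Psi (Lam a (gam X))"
  shows "\<exists>a\<in>A. \<exists>w. X = Lam a (gam X) \<and> g = Lam a w"
proof -
  define t :: "nat \<Rightarrow> real" where "t n = 1 / real (Suc n)" for n
  have t_pos: "t n > 0" for n by (simp add: t_def)
  have t_lim: "t \<longlonglongrightarrow> 0" unfolding t_def by (rule LIMSEQ_Suc[OF lim_const_over_n])
  define Y where "Y n = X - t n *\<^sub>R g" for n
  have "\<forall>n. \<exists>a. a \<in> A \<and> Y n = Lam a (gam (Y n))" using sds_decomposition by blast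
  then obtain an where an: "\<And>n. an n \<in> A" "\<And>n. Y n = Lam (an n) (gam (Y n))" by metis
  have lin: "linear (Lam (an n))" for n
    using sds_Lam_isometry[OF an(1)] by (simp add: lin_isometry_def)
  define D where "D n = (1 / t n) *\<^sub>R (Lam (an n) (gam X) - X)" for n
  have D_lim: "D \<longlonglongrightarrow> 0"
  proof (rule tendstoI)
    fix eps :: real assume "eps > 0"
    then obtain \<delta> where "\<delta> > 0" and displacement:
      "\<And>t a. 0 < t \<Longrightarrow> t < \<delta> \<Longrightarrow> a \<in> A \<Longrightarrow> X - t *\<^sub>R g = Lam a (gam (X - t *\<^sub>R g)) \<Longrightarrow>
         norm (Lam a (gam X) - X) \<le> eps / 2 * t"
      using sds_orbit_displacement_le[OF grad \<open>e > 0\<close> orbit_min, of "eps / 2"] by auto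
    have "eventually (\<lambda>n. t n < \<delta>) sequentially"
      using t_lim \<open>\<delta> > 0\<close> by (rule order_tendstoD)
    then show "eventually (\<lambda>n. dist (D n) 0 < eps) sequentially"
    proof eventually_elim
      case (elim n)
      have "norm (Lam (an n) (gam X) - X) \<le> eps / 2 * t n"
        using displacement[OF t_pos elim an(1)] an(2) by (simp add: Y_def)
      then have "norm (Lam (an n) (gam X) - X) / t n \<le> eps / 2"
        using t_pos[of n] by (simp add: pos_divide_le_eq)
      moreover have "dist (D n) 0 = norm (Lam (an n) (gam X) - X) / t n"
        unfolding D_def dist_0_norm norm_scaleR using t_pos[of n] by simp
      ultimately show ?case using \<open>eps > 0\<close> by linarith
    qed
  qed
  define w where "w n = (1 / t n) *\<^sub>R (gam X - gam (Y n))" for n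
  have w_bound: "norm (w n) \<le> norm g" for n
  proof -
    have "norm (gam X - gam (Y n)) \<le> t n * norm g"
      using norm_gam_diff_le[of X "Y n"] t_pos[of n] by (simp add: Y_def)
    moreover have "norm (w n) = norm (gam X - gam (Y n)) / t n"
      unfolding w_def norm_scaleR using t_pos[of n] by simp
    ultimately show ?thesis using t_pos[of n] by (simp add: pos_divide_le_eq mult.commute)
  qed
  have Lam_w: "Lam (an n) (w n) = g + D n" for n
  proof -
    have "Lam (an n) (w n) = (1 / t n) *\<^sub>R (Lam (an n) (gam X) - Y n)"
      using lin[of n] an(2)[of n] by (simp add: w_def linear_diff linear_scale)
    then show ?thesis using t_pos[of n] by (simp add: Y_def D_def algebra_simps)
  qed
  have Lam_gam_X: "Lam (an n) (gam X) = X + t n *\<^sub>R D n" for n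
    using t_pos[of n] by (simp add: D_def)
  define L where "L n = Blinfun (Lam (an n))" for n
  have L_apply: "blinfun_apply (L n) = Lam (an n)" for n
    using sds_Lam_isometry[OF an(1)] unfolding L_def
    by (intro bounded_linear_Blinfun_apply lin_isometry_bounded_linear)
  have L_mem: "L n \<in> (\<lambda>a. Blinfun (Lam a)) ` A" for n unfolding L_def using an(1) by (rule imageI)
  have "(\<lambda>n. blinfun_apply (L n) (w n)) \<longlonglongrightarrow> g"
    using tendsto_add[OF tendsto_const D_lim, of g] by (simp add: L_apply Lam_w)
  moreover have "(\<lambda>n. blinfun_apply (L n) (gam X)) \<longlonglongrightarrow> X"
    using tendsto_add[OF tendsto_const tendsto_scaleR[OF t_lim D_lim], of X]
    by (simp add: L_apply Lam_gam_X)
  ultimately have "\<exists>L0\<in>(\<lambda>a. Blinfun (Lam a)) ` A. \<exists>w0.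
      blinfun_apply L0 w0 = g \<and> blinfun_apply L0 (gam X) = X"
    by (rule compact_blinfun_sequence_limit[OF compact_Lam_image[OF closed] L_mem w_bound])
  then obtain a w0 where a: "a \<in> A" and "blinfun_apply (Blinfun (Lam a)) w0 = g"
    and "blinfun_apply (Blinfun (Lam a)) (gam X) = X"
    by (elim bexE exE conjE imageE) simp
  have "blinfun_apply (Blinfun (Lam a)) = Lam a"
    using sds_Lam_isometry[OF a(1)]
    by (intro bounded_linear_Blinfun_apply lin_isometry_bounded_linear)
  then have "X = Lam a (gam X)" and "g = Lam a w0"
    using \<open>blinfun_apply (Blinfun (Lam a)) w0 = g\<close> \<open>blinfun_apply (Blinfun (Lam a)) (gam X) = X\<close>
    by simp_all
  then show ?thesis using a(1) by blast
qed

lemma sds_local_minimizer_orbit: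
  assumes inv: "S_invariant G act f"
    and min: "local_minimizer (\<lambda>Z. f (gam Z) + ereal (h Z)) X"
    and finite: "\<bar>f (gam X)\<bar> \<noteq> \<infinity>"
  obtains e where "e > 0"
    and "\<And>a. a \<in> A \<Longrightarrow> dist (Lam a (gam X)) X < e \<Longrightarrow> h X \<le> h (Lam a (gam X))"
proof -
  obtain e where e: "e > 0" "\<And>Z. dist Z X < e \<Longrightarrow> f (gam X) + ereal (h X) \<le> f (gam Z) + ereal (h Z)"
    using min unfolding local_minimizer_def by blast
  have "h X \<le> h (Lam a (gam X))" if "a \<in> A" "dist (Lam a (gam X)) X < e" for a
    using e(2)[OF that(2)] sds_invariant_gam_Lam[OF inv that(1)] finite
    by (cases "f (gam X)") auto
  then show ?thesis using e(1) that by blast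
qed

lemma sds_local_minimizer_pullback:
  assumes inv: "S_invariant G act f"
    and a: "a \<in> A" "X = Lam a (gam X)"
    and min: "local_minimizer (\<lambda>Z. f (gam Z) + h Z) X"
  shows "local_minimizer (\<lambda>z. f z + h (Lam a z)) (gam X)"
proof -
  obtain e where e: "e > 0" "\<And>Z. dist Z X < e \<Longrightarrow> f (gam X) + h X \<le> f (gam Z) + h Z"
    using min unfolding local_minimizer_def by blast
  have isometry: "lin_isometry (Lam a)" using a(1) by (rule sds_Lam_isometry)
  have "dist (Lam a z) X = dist z (gam X)" for z
    using isometry a(2) unfolding lin_isometry_def dist_norm by (metis linear_diff)
  then have "f (gam X) + h (Lam a (gam X)) \<le> f z + h (Lam a z)" if "dist z (gam X) < e" for z
    using e(2)[of "Lam a z"] that a sds_invariant_gam_Lam[OF inv a(1)] by simp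
  then show ?thesis using e(1) unfolding local_minimizer_def by blast
qed

end

theorem corollary4p4:
  fixes G :: "('s, 'm) monoid_scheme"
    and act :: "'s \<Rightarrow> 'x::euclidean_space \<Rightarrow> 'x"
    and gam :: "'h::euclidean_space \<Rightarrow> 'x"
    and A :: "'a set"
    and Lam :: "'a \<Rightarrow> 'x \<Rightarrow> 'h"
    and phi :: "'x \<Rightarrow> ereal"
    and Psi :: "'h \<Rightarrow> real"
    and X :: 'h
  assumes sds: "spectral_decomposition_system G act gam A Lam"
    and closedLam: "closed ((\<lambda>a. Blinfun (Lam a)) ` A)"
    and proper: "proper_fun phi"
    and inv: "S_invariant G act phi"
    and diff: "\<forall>Z. Psi differentiable (at Z)"
    and dom: "gam X \<in> edom phi"
    and locmin: "local_minimizer (\<lambda>Z. phi (gam Z) + ereal (Psi Z)) X"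
  shows "\<exists>y a. y \<in> frechet_subdiff phi (gam X) \<and> a \<in> A_of A Lam gam X \<and>
           (GDERIV Psi X :> - Lam a y)"
proof -
  obtain g where grad: "GDERIV Psi X :> g" using diff differentiable_imp_gderiv by blast
  have finite: "\<bar>phi (gam X)\<bar> \<noteq> \<infinity>"
    using dom proper unfolding edom_def proper_fun_def by auto
  obtain e where "e > 0"
    and orbit_min: "\<And>a. a \<in> A \<Longrightarrow> dist (Lam a (gam X)) X < e \<Longrightarrow> Psi X \<le> Psi (Lam a (gam X))"
    using sds_local_minimizer_orbit[OF sds inv locmin finite] by blast
  obtain a w where a: "a \<in> A" "X = Lam a (gam X)" and g_eq: "g = Lam a w"
    using sds_aligned_gradient[OF sds closedLam grad \<open>e > 0\<close> orbit_min] by blast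
  have isometry: "lin_isometry (Lam a)" using sds_Lam_isometry[OF sds a(1)] .
  have "local_minimizer (\<lambda>z. phi z + ereal (Psi (Lam a z))) (gam X)"
    using sds_local_minimizer_pullback[OF sds inv a locmin] .
  moreover have "GDERIV (\<lambda>z. Psi (Lam a z)) (gam X) :> w"
    using isometry grad unfolding g_eq by (subst (asm) a(2)) (rule gderiv_compose_lin_isometry)
  ultimately have "- w \<in> frechet_subdiff phi (gam X)"
    using finite by (rule local_minimizer_frechet_subdiff)
  moreover have "GDERIV Psi X :> - Lam a (- w)"
    using grad isometry unfolding g_eq lin_isometry_def by (simp add: linear_neg)
  ultimately show ?thesis using a unfolding A_of_def by blast
qed

end
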